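(* Let $t\le T$, $\omega_1(0)\in L_2(\Omega)$, $u_1\in L_4(\Omega^t)$, $F_1\in L_2(0,t;L_{6/5}(\Omega))$, and let $\omega_1$ solve \[\omega_{1,t}+\bm v\cdot\nabla\omega_1-\nu\Big(\Delta\omega_1+\frac2r\omega_{1,r}\Big)=2u_1u_{1,z}+F_1\ \text{in }\Omega^t,\qquad\omega_1=0\ \text{on }S^t,\qquad\omega_1|_{t=0}=\omega_1(0).\] Then \[\frac12\int_\Omega\omega_1^2\,dx+\frac\nu2\int_{\Omega^t}|\nabla\omega_1|^2dx\,dt'+\nu\int_0^t\int_{-a}^a\omega_1^2\big|_{r=0}dz\,dt'\le\frac1\nu\int_{\Omega^t}u_1^4dx\,dt'+c\|F_1\|_{L_2(0,t;L_{6/5}(\Omega))}^2+\int_\Omega\omega_1^2(0)\,dx,\] where the first term on the left is evaluated at time $t$.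
   Context: $\Omega=\{x\in\mathbb R^3: r<R,|z|<a\}$ in cylindrical coordinates, $S=\partial\Omega$, $\Omega^t=\Omega\times(0,t)$, $S^t=S\times(0,t)$, $\nu>0$. $\bm v=v_r\bar e_r+v_\varphi\bar e_\varphi+v_z\bar e_z$ is an axially symmetric solution of the Navier–Stokes equations $\bm v_t+(\bm v\cdot\nabla)\bm v-\nu\Delta\bm v+\nabla p=\bm f$, $\operatorname{div}\bm v=0$ in $\Omega$ with $\bm v\cdot\bar n=0$, $v_\varphi=0$, $\omega_\varphi=v_{r,z}-v_{z,r}=0$ on $S$. $u_1=v_\varphi/r$, $\omega_1=\omega_\varphi/r$, $F_1=F_\varphi/r$ with $F_\varphi=(\operatorname{rot}\bm f)\cdot\bar e_\varphi$. $\nabla=\bar e_r\partial_r+\bar e_z\partial_z$, $\Delta=\partial_r^2+\frac1r\partial_r+\partial_z^2$. $c$ is a generic positive constant. Solutions are assumed regular enough for the computations. *)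

theory Defs
  imports "HOL-Analysis.Analysis"
begin

text \<open>Axially symmetric scalar fields are represented in cylindrical coordinates as
  functions of (r, z, time).  Integral over the cylinder Omega = {r < R, |z| < a} in R^3:
  dx = r dr dphi dz, integrated over phi gives the factor 2 pi.\<close>

definition cyl_int :: "real \<Rightarrow> real \<Rightarrow> (real \<Rightarrow> real \<Rightarrow> real) \<Rightarrow> real" where
  "cyl_int R a g = 2 * pi * integral ({0..R} \<times> {-a..a}) (\<lambda>(r, z). g r z * r)"

definition stbox :: "real \<Rightarrow> real \<Rightarrow> real \<Rightarrow> (real \<times> real \<times> real) set" where
  "stbox R a t = {0..R} \<times> {-a..a} \<times> {0..t}"

text \<open>Hypotheses of the lemma (classical regular solutions):
  vr, vz : components v_r, v_z of the velocity, with derivatives vr_r = v_{r,r}, vz_z = v_{z,z};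
  w = omega_1 with partial derivatives w_r, w_z, w_rr, w_zz, w_t;
  u = u_1 with u_z = u_{1,z};  F = F_1.\<close>

definition omega1_problem ::
  "real \<Rightarrow> real \<Rightarrow> real \<Rightarrow> real \<Rightarrow>
   (real \<Rightarrow> real \<Rightarrow> real \<Rightarrow> real) \<Rightarrow> (real \<Rightarrow> real \<Rightarrow> real \<Rightarrow> real) \<Rightarrow>
   (real \<Rightarrow> real \<Rightarrow> real \<Rightarrow> real) \<Rightarrow> (real \<Rightarrow> real \<Rightarrow> real \<Rightarrow> real) \<Rightarrow>
   (real \<Rightarrow> real \<Rightarrow> real \<Rightarrow> real) \<Rightarrow> (real \<Rightarrow> real \<Rightarrow> real \<Rightarrow> real) \<Rightarrow>
   (real \<Rightarrow> real \<Rightarrow> real \<Rightarrow> real) \<Rightarrow> (real \<Rightarrow> real \<Rightarrow> real \<Rightarrow> real) \<Rightarrow>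
   (real \<Rightarrow> real \<Rightarrow> real \<Rightarrow> real) \<Rightarrow> (real \<Rightarrow> real \<Rightarrow> real \<Rightarrow> real) \<Rightarrow>
   (real \<Rightarrow> real \<Rightarrow> real \<Rightarrow> real) \<Rightarrow> (real \<Rightarrow> real \<Rightarrow> real \<Rightarrow> real) \<Rightarrow>
   (real \<Rightarrow> real \<Rightarrow> real \<Rightarrow> real) \<Rightarrow> bool" where
  "omega1_problem R a nu t vr vr_r vz vz_z w w_r w_z w_rr w_zz w_t u u_z F \<longleftrightarrow>
     \<comment> \<open>regularity: partial derivatives on the closed space-time box\<close>
     (\<forall>r z \<tau>. 0 \<le> r \<and> r \<le> R \<and> -a \<le> z \<and> z \<le> a \<and> 0 \<le> \<tau> \<and> \<tau> \<le> t \<longrightarrow>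
        ((\<lambda>s. vr s z \<tau>) has_real_derivative vr_r r z \<tau>) (at r within {0..R}) \<and>
        ((\<lambda>s. vz r s \<tau>) has_real_derivative vz_z r z \<tau>) (at z within {-a..a}) \<and>
        ((\<lambda>s. w s z \<tau>) has_real_derivative w_r r z \<tau>) (at r within {0..R}) \<and>
        ((\<lambda>s. w r s \<tau>) has_real_derivative w_z r z \<tau>) (at z within {-a..a}) \<and>
        ((\<lambda>s. w_r s z \<tau>) has_real_derivative w_rr r z \<tau>) (at r within {0..R}) \<and>
        ((\<lambda>s. w_z r s \<tau>) has_real_derivative w_zz r z \<tau>) (at z within {-a..a}) \<and>
        ((\<lambda>s. w r z s) has_real_derivative w_t r z \<tau>) (at \<tau> within {0..t}) \<and>
        ((\<lambda>s. u r s \<tau>) has_real_derivative u_z r z \<tau>) (at z within {-a..a})) \<and>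
     continuous_on (stbox R a t) (\<lambda>(r, z, \<tau>). vr r z \<tau>) \<and>
     continuous_on (stbox R a t) (\<lambda>(r, z, \<tau>). vr_r r z \<tau>) \<and>
     continuous_on (stbox R a t) (\<lambda>(r, z, \<tau>). vz r z \<tau>) \<and>
     continuous_on (stbox R a t) (\<lambda>(r, z, \<tau>). vz_z r z \<tau>) \<and>
     continuous_on (stbox R a t) (\<lambda>(r, z, \<tau>). w r z \<tau>) \<and>
     continuous_on (stbox R a t) (\<lambda>(r, z, \<tau>). w_r r z \<tau>) \<and>
     continuous_on (stbox R a t) (\<lambda>(r, z, \<tau>). w_z r z \<tau>) \<and>
     continuous_on (stbox R a t) (\<lambda>(r, z, \<tau>). w_rr r z \<tau>) \<and>
     continuous_on (stbox R a t) (\<lambda>(r, z, \<tau>). w_zz r z \<tau>) \<and>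
     continuous_on (stbox R a t) (\<lambda>(r, z, \<tau>). w_t r z \<tau>) \<and>
     continuous_on (stbox R a t) (\<lambda>(r, z, \<tau>). u r z \<tau>) \<and>
     continuous_on (stbox R a t) (\<lambda>(r, z, \<tau>). u_z r z \<tau>) \<and>
     continuous_on (stbox R a t) (\<lambda>(r, z, \<tau>). F r z \<tau>) \<and>
     \<comment> \<open>div v = 0 in Omega (axially symmetric form: v_{r,r} + v_r/r + v_{z,z} = 0)\<close>
     (\<forall>r z \<tau>. 0 < r \<and> r < R \<and> -a < z \<and> z < a \<and> 0 < \<tau> \<and> \<tau> < t \<longrightarrow>
        vr_r r z \<tau> + vr r z \<tau> / r + vz_z r z \<tau> = 0) \<and>
     \<comment> \<open>v . n = 0 on S\<close>
     (\<forall>z \<tau>. -a \<le> z \<and> z \<le> a \<and> 0 \<le> \<tau> \<and> \<tau> \<le> t \<longrightarrow> vr R z \<tau> = 0) \<and>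
     (\<forall>r \<tau>. 0 \<le> r \<and> r \<le> R \<and> 0 \<le> \<tau> \<and> \<tau> \<le> t \<longrightarrow> vz r a \<tau> = 0 \<and> vz r (-a) \<tau> = 0) \<and>
     \<comment> \<open>the equation for omega_1 in Omega^t\<close>
     (\<forall>r z \<tau>. 0 < r \<and> r < R \<and> -a < z \<and> z < a \<and> 0 < \<tau> \<and> \<tau> < t \<longrightarrow>
        w_t r z \<tau> + (vr r z \<tau> * w_r r z \<tau> + vz r z \<tau> * w_z r z \<tau>)
          - nu * (w_rr r z \<tau> + w_r r z \<tau> / r + w_zz r z \<tau> + 2 / r * w_r r z \<tau>)
        = 2 * u r z \<tau> * u_z r z \<tau> + F r z \<tau>) \<and>
     \<comment> \<open>omega_1 = 0 on S^t\<close>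
     (\<forall>z \<tau>. -a \<le> z \<and> z \<le> a \<and> 0 \<le> \<tau> \<and> \<tau> \<le> t \<longrightarrow> w R z \<tau> = 0) \<and>
     (\<forall>r \<tau>. 0 \<le> r \<and> r \<le> R \<and> 0 \<le> \<tau> \<and> \<tau> \<le> t \<longrightarrow> w r a \<tau> = 0 \<and> w r (-a) \<tau> = 0)"

end

theory Submission
  imports Defs
begin

(* Multiply the equation by omega_1 and integrate with respect to r dr dz over the meridian
   rectangle [0,R] x [-a,a].  The diffusion term gives the dissipation |grad omega_1|^2, and the
   extra term (2/r) omega_{1,r} produces the flux nu omega_1^2 through the axis r = 0; the convection
   term drops out because div v = 0 and omega_1 vanishes on S.  After an integration by parts,
   2 u_1 u_{1,z} omega_1 becomes -u_1^2 omega_{1,z}, which Young's inequality bounds by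
   nu/4 |grad omega_1|^2 + u_1^4/nu.  The forcing term is bounded by Hoelder's inequality with
   exponents 6/5 and 6, the Sobolev inequality |omega_1|_6 <= 4 |grad omega_1|_2 for the measure
   r dr dz, and Young's inequality again.  Integrating in time gives the estimate with c = 32 pi/nu. *)

section \<open>Young's and H\<ouml>lder's inequalities\<close>

lemma scaled_Youngs_inequality:
  fixes a b k p q :: real
  assumes "p > 1" "q > 1" "1/p + 1/q = 1" "0 \<le> a" "0 \<le> b" "0 < k"
  shows "a * b \<le> k powr (-p) * a powr p / p + k powr q * b powr q / q"
proof -
  have "a * b = (a / k) * (k * b)" using \<open>0 < k\<close> by simp
  also have "\<dots> \<le> (a / k) powr p / p + (k * b) powr q / q"
    using assms by (intro Youngs_inequality) auto
  also have "(a / k) powr p = k powr (-p) * a powr p"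
    using assms by (simp add: powr_divide powr_minus divide_simps)
  also have "(k * b) powr q = k powr q * b powr q"
    using assms by (simp add: powr_mult)
  finally show ?thesis .
qed

lemma le_inf_scaled_Young:
  fixes p q P Q x :: real
  assumes pq: "p > 1" "q > 1" "1/p + 1/q = 1" and "0 \<le> P" "0 \<le> Q"
    and bound: "\<And>k. 0 < k \<Longrightarrow> x \<le> k powr (-p) * P / p + k powr q * Q / q"
  shows "x \<le> P powr (1/p) * Q powr (1/q)"
proof (cases "P = 0 \<or> Q = 0")
  case True
  have "x \<le> 0"
  proof (cases "P = 0")
    case True
    have "((\<lambda>k. k powr q * Q / q) \<longlongrightarrow> 0) (at_right 0)" using pq by real_asymp
    moreover have "\<forall>\<^sub>F k in at_right 0. x \<le> k powr q * Q / q"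
      using eventually_at_right_less[of 0] by eventually_elim (use bound True in auto)
    ultimately show ?thesis by (rule tendsto_lowerbound) simp
  next
    case False
    with \<open>P = 0 \<or> Q = 0\<close> have "Q = 0" by simp
    have "((\<lambda>k. k powr (-p) * P / p) \<longlongrightarrow> 0) at_top" using pq by real_asymp
    moreover have "\<forall>\<^sub>F k in at_top. x \<le> k powr (-p) * P / p"
      using eventually_gt_at_top[of 0] by eventually_elim (use bound \<open>Q = 0\<close> in auto)
    ultimately show ?thesis by (rule tendsto_lowerbound) simp
  qed
  with True show ?thesis by auto
next
  case False
  with assms have P: "P > 0" and Q: "Q > 0" by auto
  have pq_sum: "p + q = p * q"
    using pq by (simp add: field_simps)
  \<comment> \<open>the scale at which both terms of the bound are equal\<close>
  define k where "k = (P / Q) powr (1 / (p + q))"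
  have k: "k > 0" using P Q by (simp add: k_def)
  have inv_p: "1/p = 1 - 1/q" and inv_q: "1/q = 1 - 1/p" using pq(3) by simp_all
  have "k powr (-p) * P = P powr (1/p) * Q powr (1/q)"
  proof -
    have "k powr (-p) = (P / Q) powr (- 1 / q)"
      using pq pq_sum by (simp add: k_def powr_powr field_simps)
    also have "\<dots> = P powr (- 1 / q) * Q powr (1 / q)"
      using P Q by (simp add: powr_divide powr_minus divide_simps)
    finally have "k powr (-p) * P = (P * P powr (- 1 / q)) * Q powr (1 / q)"
      by (simp add: ac_simps)
    also have "P * P powr (- 1 / q) = P powr (1 / p)"
      using P by (simp add: powr_mult_base inv_p)
    finally show ?thesis .
  qed
  moreover have "k powr q * Q = P powr (1/p) * Q powr (1/q)"
  proof -
    have "k powr q = (P / Q) powr (1 / p)"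
      using pq pq_sum by (simp add: k_def powr_powr field_simps)
    also have "\<dots> = P powr (1 / p) * Q powr (- 1 / p)"
      using P Q by (simp add: powr_divide powr_minus divide_simps)
    finally have "k powr q * Q = P powr (1 / p) * (Q * Q powr (- 1 / p))"
      by (simp add: ac_simps)
    also have "Q * Q powr (- 1 / p) = Q powr (1 / q)"
      using Q by (simp add: powr_mult_base inv_q)
    finally show ?thesis .
  qed
  ultimately have "x \<le> P powr (1/p) * Q powr (1/q) * (1/p + 1/q)"
    using bound[OF k] by (simp add: distrib_left)
  with pq(3) show ?thesis by simp
qed

lemma integral_Holder_weighted:
  fixes f g w :: "'a::euclidean_space \<Rightarrow> real" and p q :: real
  assumes pq: "p > 1" "q > 1" "1/p + 1/q = 1"
    and nonneg: "\<And>x. x \<in> S \<Longrightarrow> 0 \<le> f x" "\<And>x. x \<in> S \<Longrightarrow> 0 \<le> g x" "\<And>x. x \<in> S \<Longrightarrow> 0 \<le> w x"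
    and int: "(\<lambda>x. f x * g x * w x) integrable_on S" "(\<lambda>x. f x powr p * w x) integrable_on S"
      "(\<lambda>x. g x powr q * w x) integrable_on S"
  shows "integral S (\<lambda>x. f x * g x * w x)
    \<le> integral S (\<lambda>x. f x powr p * w x) powr (1/p) * integral S (\<lambda>x. g x powr q * w x) powr (1/q)"
proof (rule le_inf_scaled_Young[OF pq])
  show "0 \<le> integral S (\<lambda>x. f x powr p * w x)" "0 \<le> integral S (\<lambda>x. g x powr q * w x)"
    using nonneg int by (auto intro!: integral_nonneg)
  fix k :: real assume k: "0 < k"
  have "integral S (\<lambda>x. f x * g x * w x)
      \<le> integral S (\<lambda>x. k powr (-p) / p * (f x powr p * w x) + k powr q / q * (g x powr q * w x))"
  proof (rule integral_le)
    fix x assume x: "x \<in> S"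
    have "f x * g x \<le> k powr (-p) * f x powr p / p + k powr q * g x powr q / q"
      using scaled_Youngs_inequality[OF pq] nonneg x k by blast
    then show "f x * g x * w x \<le> k powr (-p) / p * (f x powr p * w x) + k powr q / q * (g x powr q * w x)"
      using mult_right_mono[OF _ nonneg(3)[OF x]] by (fastforce simp: algebra_simps)
  qed (rule integrable_add integrable_on_cmult_left[where 'b=real, simplified] int)+
  also have "\<dots> = k powr (-p) * integral S (\<lambda>x. f x powr p * w x) / p
      + k powr q * integral S (\<lambda>x. g x powr q * w x) / q"
    by (subst integral_add) (rule integrable_on_cmult_left[where 'b=real, simplified] int | simp)+
  finally show "integral S (\<lambda>x. f x * g x * w x) \<le> \<dots>" .
qed

lemma integral_Cauchy_Schwarz_weighted:
  fixes f g w :: "'a::euclidean_space \<Rightarrow> real"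
  assumes nonneg: "\<And>x. x \<in> S \<Longrightarrow> 0 \<le> f x" "\<And>x. x \<in> S \<Longrightarrow> 0 \<le> g x" "\<And>x. x \<in> S \<Longrightarrow> 0 \<le> w x"
    and int: "(\<lambda>x. f x * g x * w x) integrable_on S" "(\<lambda>x. (f x)\<^sup>2 * w x) integrable_on S"
      "(\<lambda>x. (g x)\<^sup>2 * w x) integrable_on S"
  shows "integral S (\<lambda>x. f x * g x * w x)
    \<le> sqrt (integral S (\<lambda>x. (f x)\<^sup>2 * w x)) * sqrt (integral S (\<lambda>x. (g x)\<^sup>2 * w x))"
proof -
  have sq: "integral S (\<lambda>x. h x powr 2 * w x) = integral S (\<lambda>x. (h x)\<^sup>2 * w x)"
    and sq_int: "(\<lambda>x. h x powr 2 * w x) integrable_on S \<longleftrightarrow> (\<lambda>x. (h x)\<^sup>2 * w x) integrable_on S"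
    if "\<And>x. x \<in> S \<Longrightarrow> 0 \<le> h x" for h
    using that by (auto intro!: integral_cong integrable_cong)
  have "integral S (\<lambda>x. f x * g x * w x)
      \<le> integral S (\<lambda>x. f x powr 2 * w x) powr (1/2) * integral S (\<lambda>x. g x powr 2 * w x) powr (1/2)"
    by (rule integral_Holder_weighted) (use nonneg int in \<open>auto simp: sq_int\<close>)
  also have "\<dots> = sqrt (integral S (\<lambda>x. (f x)\<^sup>2 * w x)) * sqrt (integral S (\<lambda>x. (g x)\<^sup>2 * w x))"
    using nonneg int by (simp add: sq powr_half_sqrt integral_nonneg)
  finally show ?thesis .
qed

section \<open>Integrals over the meridian rectangle\<close>

text \<open>The Jacobian r of cylindrical coordinates is written explicitly in the integrands
  (see cyl_int_eq_rect_integral).\<close>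

definition rect_integral :: "real \<Rightarrow> real \<Rightarrow> (real \<Rightarrow> real \<Rightarrow> real) \<Rightarrow> real" where
  "rect_integral R a h = integral ({0..R} \<times> {-a..a}) (\<lambda>p. h (fst p) (snd p))"

abbreviation rect_continuous :: "real \<Rightarrow> real \<Rightarrow> (real \<Rightarrow> real \<Rightarrow> real) \<Rightarrow> bool" where
  "rect_continuous R a h \<equiv> continuous_on ({0..R} \<times> {-a..a}) (\<lambda>p. h (fst p) (snd p))"

lemma cyl_int_eq_rect_integral: "cyl_int R a g = 2 * pi * rect_integral R a (\<lambda>r z. g r z * r)"
  unfolding cyl_int_def rect_integral_def by (simp add: split_beta')

lemma rect_eq_cbox: "{0..R} \<times> {-a..a} = cbox (0::real, -a) (R, a::real)"
  by (simp add: cbox_Pair_eq)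

lemma rect_continuous_slice_r:
  assumes "rect_continuous R a h" "z \<in> {-a..a}"
  shows "continuous_on {0..R} (\<lambda>r. h r z)"
proof -
  have "continuous_on {0..R} ((\<lambda>p. h (fst p) (snd p)) \<circ> (\<lambda>r. (r, z)))"
    by (rule continuous_on_compose)
      (use assms(2) in \<open>auto intro!: continuous_intros continuous_on_subset[OF assms(1)]\<close>)
  then show ?thesis by (simp add: o_def)
qed

lemma rect_continuous_slice_z:
  assumes "rect_continuous R a h" "r \<in> {0..R}"
  shows "continuous_on {-a..a} (\<lambda>z. h r z)"
proof -
  have "continuous_on {-a..a} ((\<lambda>p. h (fst p) (snd p)) \<circ> (\<lambda>z. (r, z)))"
    by (rule continuous_on_compose)
      (use assms(2) in \<open>auto intro!: continuous_intros continuous_on_subset[OF assms(1)]\<close>)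
  then show ?thesis by (simp add: o_def)
qed

lemma integrable_on_rect:
  fixes f :: "real \<times> real \<Rightarrow> real"
  shows "continuous_on ({0..R} \<times> {-a..a}) f \<Longrightarrow> f integrable_on ({0..R} \<times> {-a..a})"
  unfolding rect_eq_cbox by (rule integrable_continuous)

lemma rect_integral_iterated_r_z:
  "rect_continuous R a h \<Longrightarrow> rect_integral R a h = integral {0..R} (\<lambda>r. integral {-a..a} (\<lambda>z. h r z))"
  using integral_prod_continuous[of 0 "-a" R a "\<lambda>p. h (fst p) (snd p)"]
  unfolding rect_integral_def rect_eq_cbox by simp

lemma rect_integral_iterated_z_r:
  assumes "rect_continuous R a h"
  shows "rect_integral R a h = integral {-a..a} (\<lambda>z. integral {0..R} (\<lambda>r. h r z))"
proof -
  have "continuous_on (cbox (0, -a) (R, a)) (\<lambda>(r, z). h r z)"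
    using assms unfolding rect_eq_cbox by (simp add: split_beta')
  from integral_swap_continuous[OF this] show ?thesis
    using rect_integral_iterated_r_z[OF assms] by simp
qed

lemma continuous_on_integral_z:
  assumes "rect_continuous R a h"
  shows "continuous_on {0..R} (\<lambda>r. integral {-a..a} (\<lambda>z. h r z))"
proof -
  have "continuous_on ({0..R} \<times> cbox (-a) a) (\<lambda>(r, z). h r z)"
    using assms by (simp add: split_beta')
  from integral_continuous_on_param[OF this] show ?thesis by simp
qed

lemma continuous_on_integral_r:
  assumes "rect_continuous R a h"
  shows "continuous_on {-a..a} (\<lambda>z. integral {0..R} (\<lambda>r. h r z))"
proof -
  have "continuous_on ({-a..a} \<times> {0..R}) ((\<lambda>p. h (fst p) (snd p)) \<circ> prod.swap)"
    by (intro continuous_on_compose continuous_on_subset[OF assms]) (auto intro: continuous_intros)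
  then have "continuous_on ({-a..a} \<times> cbox 0 R) (\<lambda>(z, r). h r z)"
    by (simp add: split_beta' o_def)
  from integral_continuous_on_param[OF this] show ?thesis by simp
qed

lemma rect_integral_add:
  "rect_continuous R a f \<Longrightarrow> rect_continuous R a g \<Longrightarrow>
    rect_integral R a (\<lambda>r z. f r z + g r z) = rect_integral R a f + rect_integral R a g"
  unfolding rect_integral_def by (intro integral_add integrable_on_rect)

lemma rect_integral_diff:
  "rect_continuous R a f \<Longrightarrow> rect_continuous R a g \<Longrightarrow>
    rect_integral R a (\<lambda>r z. f r z - g r z) = rect_integral R a f - rect_integral R a g"
  unfolding rect_integral_def by (intro integral_diff integrable_on_rect)

lemma rect_integral_cmult: "rect_integral R a (\<lambda>r z. c * f r z) = c * rect_integral R a f"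
  unfolding rect_integral_def by simp

lemma rect_integral_lincomb:
  "rect_continuous R a f \<Longrightarrow> rect_continuous R a g \<Longrightarrow>
    rect_integral R a (\<lambda>r z. c * f r z + d * g r z) = c * rect_integral R a f + d * rect_integral R a g"
  by (simp add: rect_integral_add rect_integral_cmult continuous_on_mult_left)

lemma rect_integral_mono:
  "rect_continuous R a f \<Longrightarrow> rect_continuous R a g \<Longrightarrow>
    (\<And>r z. r \<in> {0..R} \<Longrightarrow> z \<in> {-a..a} \<Longrightarrow> f r z \<le> g r z) \<Longrightarrow>
    rect_integral R a f \<le> rect_integral R a g"
  unfolding rect_integral_def by (rule integral_le) (auto intro: integrable_on_rect)

lemma rect_integral_nonneg:
  "rect_continuous R a f \<Longrightarrow> (\<And>r z. r \<in> {0..R} \<Longrightarrow> z \<in> {-a..a} \<Longrightarrow> 0 \<le> f r z) \<Longrightarrow>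
    0 \<le> rect_integral R a f"
  unfolding rect_integral_def by (rule integral_nonneg) (auto intro: integrable_on_rect)

lemma rect_integral_cong:
  "(\<And>r z. r \<in> {0..R} \<Longrightarrow> z \<in> {-a..a} \<Longrightarrow> f r z = g r z) \<Longrightarrow> rect_integral R a f = rect_integral R a g"
  unfolding rect_integral_def by (rule integral_cong) auto

lemma fundamental_theorem_of_calculus_real:
  fixes f f' :: "real \<Rightarrow> real"
  assumes "a \<le> b" "\<And>x. x \<in> {a..b} \<Longrightarrow> (f has_real_derivative f' x) (at x within {a..b})"
  shows "integral {a..b} f' = f b - f a"
  using fundamental_theorem_of_calculus[of a b f f'] assms
  by (auto simp: has_real_derivative_iff_has_vector_derivative)

lemma rect_integral_deriv_r:
  assumes "0 \<le> R" "rect_continuous R a H"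
    and "\<And>r z. r \<in> {0..R} \<Longrightarrow> z \<in> {-a..a} \<Longrightarrow> ((\<lambda>s. P s z) has_real_derivative H r z) (at r within {0..R})"
  shows "rect_integral R a H = integral {-a..a} (\<lambda>z. P R z - P 0 z)"
  unfolding rect_integral_iterated_z_r[OF assms(2)]
  by (rule integral_cong) (use assms in \<open>auto intro: fundamental_theorem_of_calculus_real\<close>)

lemma rect_integral_deriv_z:
  assumes "0 \<le> a" "rect_continuous R a H"
    and "\<And>r z. r \<in> {0..R} \<Longrightarrow> z \<in> {-a..a} \<Longrightarrow> ((\<lambda>s. P r s) has_real_derivative H r z) (at z within {-a..a})"
  shows "rect_integral R a H = integral {0..R} (\<lambda>r. P r a - P r (-a))"
  unfolding rect_integral_iterated_r_z[OF assms(2)]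
  by (rule integral_cong) (use assms in \<open>auto intro: fundamental_theorem_of_calculus_real\<close>)

section \<open>A weighted Sobolev inequality\<close>

lemma le_integral_abs_deriv:
  fixes f f' :: "real \<Rightarrow> real"
  assumes deriv: "\<And>x. x \<in> {a..b} \<Longrightarrow> (f has_real_derivative f' x) (at x within {a..b})"
    and cont: "continuous_on {a..b} f'" and "f a = 0" and x: "x \<in> {a..b}"
  shows "f x \<le> integral {a..b} (\<lambda>s. \<bar>f' s\<bar>)"
proof -
  have sub: "{a..x} \<subseteq> {a..b}" using x by auto
  have cont_x: "continuous_on {a..x} f'" using continuous_on_subset[OF cont sub] .
  have "integral {a..x} f' = f x - f a"
    by (rule fundamental_theorem_of_calculus_real) (use x sub in \<open>auto intro: DERIV_subset[OF deriv]\<close>)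
  then have "f x = integral {a..x} f'" using \<open>f a = 0\<close> by simp
  also have "\<dots> \<le> integral {a..x} (\<lambda>s. \<bar>f' s\<bar>)"
    by (rule integral_le) (auto intro!: integrable_continuous_interval continuous_intros cont_x)
  also have "\<dots> \<le> integral {a..b} (\<lambda>s. \<bar>f' s\<bar>)"
    by (rule integral_subset_le[OF sub]) (auto intro!: integrable_continuous_interval continuous_intros cont cont_x)
  finally show ?thesis .
qed

context
  fixes f f' :: "real \<Rightarrow> real" and R :: real
  assumes deriv: "\<And>r. r \<in> {0..R} \<Longrightarrow> (f has_real_derivative f' r) (at r within {0..R})"
    and cont': "continuous_on {0..R} f'" and zero_at_R: "f R = 0"
begin

lemma radial_mult_le:
  assumes r: "r \<in> {0..R}"
  shows "r * f r \<le> integral {0..R} (\<lambda>s. \<bar>f' s\<bar> * s)"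
proof -
  have sub: "{r..R} \<subseteq> {0..R}" using r by auto
  have cont_r: "continuous_on {r..R} f'" using continuous_on_subset[OF cont' sub] .
  have "integral {r..R} f' = f R - f r"
    by (rule fundamental_theorem_of_calculus_real) (use r sub in \<open>auto intro: DERIV_subset[OF deriv]\<close>)
  then have "r * f r = integral {r..R} (\<lambda>s. - r * f' s)" using zero_at_R by simp
  also have "\<dots> \<le> integral {r..R} (\<lambda>s. \<bar>f' s\<bar> * s)"
  proof (rule integral_le)
    fix s assume s: "s \<in> {r..R}"
    have "- r * f' s \<le> r * \<bar>f' s\<bar>" using r by (simp add: abs_if mult_le_0_iff)
    also have "\<dots> \<le> s * \<bar>f' s\<bar>" using s by (intro mult_right_mono) auto
    finally show "- r * f' s \<le> \<bar>f' s\<bar> * s" by (simp add: mult.commute)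
  qed (auto intro!: integrable_continuous_interval continuous_intros cont_r)
  also have "\<dots> \<le> integral {0..R} (\<lambda>s. \<bar>f' s\<bar> * s)"
    by (rule integral_subset_le[OF sub])
      (use r in \<open>auto intro!: integrable_continuous_interval continuous_intros cont' cont_r\<close>)
  finally show ?thesis .
qed

lemma continuous_on_radial: "continuous_on {0..R} f"
  using DERIV_continuous_on[OF deriv] .

text \<open>Integration by parts against r; the boundary term r f vanishes at both ends.\<close>

lemma radial_integral_le:
  assumes "0 \<le> R"
  shows "integral {0..R} f \<le> integral {0..R} (\<lambda>s. \<bar>f' s\<bar> * s)"
proof -
  have "integral {0..R} (\<lambda>r. f r + r * f' r) = R * f R - 0 * f 0"
    by (rule fundamental_theorem_of_calculus_real) (use assms in \<open>auto intro!: derivative_eq_intros deriv\<close>)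
  moreover have "integral {0..R} (\<lambda>r. f r + r * f' r) = integral {0..R} f + integral {0..R} (\<lambda>r. r * f' r)"
    by (intro integral_add integrable_continuous_interval continuous_intros continuous_on_radial cont')
  ultimately have "integral {0..R} f = integral {0..R} (\<lambda>r. - (r * f' r))"
    using zero_at_R by simp
  also have "\<dots> \<le> integral {0..R} (\<lambda>s. \<bar>f' s\<bar> * s)"
  proof (rule integral_le)
    show "(\<lambda>r. - (r * f' r)) integrable_on {0..R}" "(\<lambda>s. \<bar>f' s\<bar> * s) integrable_on {0..R}"
      by (auto intro!: integrable_continuous_interval continuous_intros cont')
  qed (auto simp: abs_if mult_le_0_iff)
  finally show ?thesis .
qed

lemma radial_square_le:
  assumes "0 \<le> R" and nonneg: "\<And>r. r \<in> {0..R} \<Longrightarrow> 0 \<le> f r"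
  shows "integral {0..R} (\<lambda>r. (f r)\<^sup>2 * r) \<le> (integral {0..R} (\<lambda>s. \<bar>f' s\<bar> * s))\<^sup>2"
proof -
  define B where "B = integral {0..R} (\<lambda>s. \<bar>f' s\<bar> * s)"
  have "integral {0..R} (\<lambda>r. (f r)\<^sup>2 * r) \<le> integral {0..R} (\<lambda>r. B * f r)"
  proof (rule integral_le)
    fix r assume r: "r \<in> {0..R}"
    have "(f r)\<^sup>2 * r = f r * (r * f r)" by (simp add: power2_eq_square)
    also have "\<dots> \<le> f r * B" unfolding B_def by (intro mult_left_mono radial_mult_le r nonneg)
    finally show "(f r)\<^sup>2 * r \<le> B * f r" by (simp add: mult.commute)
  qed (auto intro!: integrable_continuous_interval continuous_intros continuous_on_radial)
  also have "\<dots> = B * integral {0..R} f" by simp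
  also have "\<dots> \<le> B * B"
  proof (rule mult_left_mono)
    show "integral {0..R} f \<le> B" unfolding B_def by (rule radial_integral_le[OF \<open>0 \<le> R\<close>])
    show "0 \<le> B" using radial_mult_le[of R] \<open>0 \<le> R\<close> zero_at_R unfolding B_def by simp
  qed
  finally show ?thesis by (simp add: B_def power2_eq_square)
qed

end

lemma radial_sixth_power_le:
  fixes h h' :: "real \<Rightarrow> real"
  assumes "0 \<le> R" and deriv: "\<And>r. r \<in> {0..R} \<Longrightarrow> (h has_real_derivative h' r) (at r within {0..R})"
    and cont': "continuous_on {0..R} h'" and "h R = 0"
  shows "integral {0..R} (\<lambda>r. (h r)^6 * r)
    \<le> integral {0..R} (\<lambda>s. \<bar>4 * (h s)^3 * h' s\<bar> * s) * sqrt (integral {0..R} (\<lambda>r. (h r)^4 * r))"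
proof -
  have cont: "continuous_on {0..R} h" using DERIV_continuous_on[OF deriv] .
  have deriv4: "((\<lambda>s. (h s)^4) has_real_derivative 4 * (h r)^3 * h' r) (at r within {0..R})"
    if "r \<in> {0..R}" for r
    using deriv[OF that] by (auto intro!: derivative_eq_intros)
  have sqrt_bound: "sqrt (integral {0..R} (\<lambda>r. ((h r)^4)\<^sup>2 * r)) \<le> integral {0..R} (\<lambda>s. \<bar>4 * (h s)^3 * h' s\<bar> * s)"
  proof (rule real_le_lsqrt)
    show "0 \<le> integral {0..R} (\<lambda>s. \<bar>4 * (h s)^3 * h' s\<bar> * s)"
      by (rule integral_nonneg) (auto intro!: integrable_continuous_interval continuous_intros cont cont')
    show "integral {0..R} (\<lambda>r. ((h r)^4)\<^sup>2 * r) \<le> (integral {0..R} (\<lambda>s. \<bar>4 * (h s)^3 * h' s\<bar> * s))\<^sup>2"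
      by (rule radial_square_le) (use deriv4 \<open>h R = 0\<close> \<open>0 \<le> R\<close> in \<open>auto intro!: continuous_intros cont cont'\<close>)
  qed
  have "integral {0..R} (\<lambda>r. (h r)^6 * r) = integral {0..R} (\<lambda>r. (h r)^4 * (h r)\<^sup>2 * r)"
    by (simp flip: power_add)
  also have "\<dots> \<le> sqrt (integral {0..R} (\<lambda>r. ((h r)^4)\<^sup>2 * r)) * sqrt (integral {0..R} (\<lambda>r. ((h r)\<^sup>2)\<^sup>2 * r))"
    by (rule integral_Cauchy_Schwarz_weighted) (auto intro!: integrable_continuous_interval continuous_intros cont)
  also have "\<dots> \<le> integral {0..R} (\<lambda>s. \<bar>4 * (h s)^3 * h' s\<bar> * s) * sqrt (integral {0..R} (\<lambda>r. ((h r)\<^sup>2)\<^sup>2 * r))"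
    using sqrt_bound by (intro mult_right_mono) (auto intro!: integral_nonneg integrable_continuous_interval continuous_intros cont)
  finally show ?thesis by (simp flip: power_mult)
qed

lemma integral_slice_le_rect_integral_abs_deriv_z:
  assumes cont: "rect_continuous R a f" "rect_continuous R a fz"
    and deriv: "\<And>r z. r \<in> {0..R} \<Longrightarrow> z \<in> {-a..a} \<Longrightarrow>
      ((\<lambda>s. f r s) has_real_derivative fz r z) (at z within {-a..a})"
    and zero: "\<And>r. r \<in> {0..R} \<Longrightarrow> f r (-a) = 0" and z: "z \<in> {-a..a}"
  shows "integral {0..R} (\<lambda>r. f r z * r) \<le> rect_integral R a (\<lambda>r z. \<bar>fz r z\<bar> * r)"
proof -
  have cont_abs: "rect_continuous R a (\<lambda>r z. \<bar>fz r z\<bar>)" using cont(2) by (auto intro: continuous_intros)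
  have "integral {0..R} (\<lambda>r. f r z * r) \<le> integral {0..R} (\<lambda>r. integral {-a..a} (\<lambda>z. \<bar>fz r z\<bar>) * r)"
  proof (rule integral_le)
    fix r assume r: "r \<in> {0..R}"
    have "f r z \<le> integral {-a..a} (\<lambda>z. \<bar>fz r z\<bar>)"
      using le_integral_abs_deriv[OF deriv[OF r] rect_continuous_slice_z[OF cont(2) r] zero[OF r] z] .
    then show "f r z * r \<le> integral {-a..a} (\<lambda>z. \<bar>fz r z\<bar>) * r" using r by (intro mult_right_mono) auto
  qed (auto intro!: integrable_continuous_interval continuous_intros rect_continuous_slice_r[OF cont(1) z]
      continuous_on_integral_z[OF cont_abs])
  also have "\<dots> = rect_integral R a (\<lambda>r z. \<bar>fz r z\<bar> * r)"
    by (subst rect_integral_iterated_r_z) (auto intro!: continuous_intros cont(2))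
  finally show ?thesis .
qed

lemma rect_integral_abs_deriv_fourth_power_le:
  assumes cont: "rect_continuous R a g" "rect_continuous R a g'"
  shows "rect_integral R a (\<lambda>r z. \<bar>4 * (g r z)^3 * g' r z\<bar> * r)
    \<le> 4 * sqrt (rect_integral R a (\<lambda>r z. (g r z)^6 * r)) * sqrt (rect_integral R a (\<lambda>r z. (g' r z)\<^sup>2 * r))"
proof -
  have "rect_integral R a (\<lambda>r z. \<bar>4 * (g r z)^3 * g' r z\<bar> * r)
      = 4 * rect_integral R a (\<lambda>r z. \<bar>g r z\<bar>^3 * \<bar>g' r z\<bar> * r)"
    by (simp add: abs_mult power_abs mult.assoc flip: rect_integral_cmult)
  also have "rect_integral R a (\<lambda>r z. \<bar>g r z\<bar>^3 * \<bar>g' r z\<bar> * r)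
      \<le> sqrt (rect_integral R a (\<lambda>r z. (\<bar>g r z\<bar>^3)\<^sup>2 * r)) * sqrt (rect_integral R a (\<lambda>r z. \<bar>g' r z\<bar>\<^sup>2 * r))"
    unfolding rect_integral_def
    by (rule integral_Cauchy_Schwarz_weighted)
      (auto intro!: integrable_on_rect continuous_intros cont)
  also have "(\<lambda>r z. (\<bar>g r z\<bar>^3)\<^sup>2 * r) = (\<lambda>r z. (g r z)^6 * r)"
    by (simp flip: power_mult add: power_even_abs)
  finally show ?thesis by simp
qed

lemma sixth_power_bootstrap:
  fixes S D M N :: real
  assumes "0 \<le> S" "0 \<le> D" "0 \<le> N" "S \<le> sqrt M * N"
    and "M \<le> 4 * sqrt S * sqrt D" "N \<le> 4 * sqrt S * sqrt D"
  shows "S \<le> 4096 * D^3"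
proof -
  define x y where "x = sqrt (sqrt S)" and "y = sqrt (sqrt D)"
  have xy: "0 \<le> x" "0 \<le> y" "sqrt S = x\<^sup>2" "sqrt D = y\<^sup>2" "S = x^4" "D = y^4"
    using assms(1,2) power_mult[of x 2 2] power_mult[of y 2 2] by (simp_all add: x_def y_def)
  have "sqrt M \<le> sqrt ((2 * x * y)\<^sup>2)"
    using assms(5) xy by (intro real_sqrt_le_mono) (simp add: power_mult_distrib)
  then have "sqrt M \<le> 2 * x * y" using xy by simp
  moreover have "N \<le> 4 * x\<^sup>2 * y\<^sup>2" using assms(6) xy by simp
  ultimately have "sqrt M * N \<le> (2 * x * y) * (4 * x\<^sup>2 * y\<^sup>2)"
    using xy assms(3) by (intro mult_mono) auto
  then have "x * x^3 \<le> (8 * y^3) * x^3"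
    using assms(4) xy by (simp add: algebra_simps power2_eq_square power3_eq_cube power4_eq_xxxx)
  then have "x \<le> 8 * y^3"
    using xy by (cases "x = 0") (simp_all add: mult_le_cancel_right)
  then have "x^4 \<le> (8 * y^3)^4" using xy by (intro power_mono) auto
  then show ?thesis using xy by (simp add: power_mult_distrib flip: power_mult)
qed

text \<open>Along each segment in z, g^4 is bounded by the integral of its z-derivative; along each
  segment in r, r g^4 is bounded by the weighted integral of its r-derivative.\<close>

lemma rect_integral_sixth_power_le_mixed:
  fixes g gr gz :: "real \<Rightarrow> real \<Rightarrow> real"
  assumes "0 \<le> R"
    and cont: "rect_continuous R a g" "rect_continuous R a gr" "rect_continuous R a gz"
    and deriv_r: "\<And>r z. r \<in> {0..R} \<Longrightarrow> z \<in> {-a..a} \<Longrightarrow>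
      ((\<lambda>s. g s z) has_real_derivative gr r z) (at r within {0..R})"
    and deriv_z: "\<And>r z. r \<in> {0..R} \<Longrightarrow> z \<in> {-a..a} \<Longrightarrow>
      ((\<lambda>s. g r s) has_real_derivative gz r z) (at z within {-a..a})"
    and zero_r: "\<And>z. z \<in> {-a..a} \<Longrightarrow> g R z = 0"
    and zero_z: "\<And>r. r \<in> {0..R} \<Longrightarrow> g r (-a) = 0"
  shows "rect_integral R a (\<lambda>r z. (g r z)^6 * r)
    \<le> sqrt (rect_integral R a (\<lambda>r z. \<bar>4 * (g r z)^3 * gz r z\<bar> * r))
      * rect_integral R a (\<lambda>r z. \<bar>4 * (g r z)^3 * gr r z\<bar> * r)"
proof -
  define M where "M = rect_integral R a (\<lambda>r z. \<bar>4 * (g r z)^3 * gz r z\<bar> * r)"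
  have slice_M: "integral {0..R} (\<lambda>r. (g r z)^4 * r) \<le> M" if z: "z \<in> {-a..a}" for z
    unfolding M_def
  proof (rule integral_slice_le_rect_integral_abs_deriv_z[OF _ _ _ _ z])
    fix r z assume "r \<in> {0..R}" "z \<in> {-a..a}"
    from deriv_z[OF this] show "((\<lambda>s. (g r s)^4) has_real_derivative 4 * (g r z)^3 * gz r z) (at z within {-a..a})"
      by (auto intro!: derivative_eq_intros)
  qed (auto intro!: continuous_intros cont zero_z)
  have slice: "integral {0..R} (\<lambda>r. (g r z)^6 * r)
      \<le> integral {0..R} (\<lambda>s. \<bar>4 * (g s z)^3 * gr s z\<bar> * s) * sqrt M" if z: "z \<in> {-a..a}" for z
  proof -
    have "integral {0..R} (\<lambda>r. (g r z)^6 * r)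
        \<le> integral {0..R} (\<lambda>s. \<bar>4 * (g s z)^3 * gr s z\<bar> * s) * sqrt (integral {0..R} (\<lambda>r. (g r z)^4 * r))"
      by (rule radial_sixth_power_le) (use \<open>0 \<le> R\<close> deriv_r zero_r z rect_continuous_slice_r[OF cont(2) z] in auto)
    also have "\<dots> \<le> integral {0..R} (\<lambda>s. \<bar>4 * (g s z)^3 * gr s z\<bar> * s) * sqrt M"
      using slice_M[OF z]
      by (intro mult_left_mono real_sqrt_le_mono integral_nonneg)
        (auto intro!: integrable_continuous_interval continuous_intros rect_continuous_slice_r[OF _ z] cont)
    finally show ?thesis .
  qed
  have "rect_integral R a (\<lambda>r z. (g r z)^6 * r)
      \<le> integral {-a..a} (\<lambda>z. integral {0..R} (\<lambda>s. \<bar>4 * (g s z)^3 * gr s z\<bar> * s) * sqrt M)"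
    by (subst rect_integral_iterated_z_r, (auto intro!: continuous_intros cont)[1], rule integral_le)
      (auto intro!: slice integrable_continuous_interval continuous_intros continuous_on_integral_r cont)
  also have "\<dots> = sqrt M * rect_integral R a (\<lambda>r z. \<bar>4 * (g r z)^3 * gr r z\<bar> * r)"
    by (subst rect_integral_iterated_z_r) (auto intro!: continuous_intros cont)
  finally show ?thesis unfolding M_def .
qed

text \<open>The axially symmetric form of the three-dimensional Sobolev inequality
  |g|_6 <= c |grad g|_2, with an explicit constant.\<close>

lemma rect_integral_sixth_power_le:
  fixes g gr gz :: "real \<Rightarrow> real \<Rightarrow> real"
  assumes "0 \<le> R"
    and cont: "rect_continuous R a g" "rect_continuous R a gr" "rect_continuous R a gz"
    and deriv_r: "\<And>r z. r \<in> {0..R} \<Longrightarrow> z \<in> {-a..a} \<Longrightarrow>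
      ((\<lambda>s. g s z) has_real_derivative gr r z) (at r within {0..R})"
    and deriv_z: "\<And>r z. r \<in> {0..R} \<Longrightarrow> z \<in> {-a..a} \<Longrightarrow>
      ((\<lambda>s. g r s) has_real_derivative gz r z) (at z within {-a..a})"
    and zero_r: "\<And>z. z \<in> {-a..a} \<Longrightarrow> g R z = 0"
    and zero_z: "\<And>r. r \<in> {0..R} \<Longrightarrow> g r (-a) = 0"
  shows "rect_integral R a (\<lambda>r z. (g r z)^6 * r)
    \<le> 4096 * (rect_integral R a (\<lambda>r z. ((gr r z)\<^sup>2 + (gz r z)\<^sup>2) * r))^3"
proof -
  define S where "S = rect_integral R a (\<lambda>r z. (g r z)^6 * r)"
  define Dr where "Dr = rect_integral R a (\<lambda>r z. (gr r z)\<^sup>2 * r)"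
  define Dz where "Dz = rect_integral R a (\<lambda>r z. (gz r z)\<^sup>2 * r)"
  define M where "M = rect_integral R a (\<lambda>r z. \<bar>4 * (g r z)^3 * gz r z\<bar> * r)"
  define N where "N = rect_integral R a (\<lambda>r z. \<bar>4 * (g r z)^3 * gr r z\<bar> * r)"
  have nonneg: "0 \<le> S" "0 \<le> Dr" "0 \<le> Dz" "0 \<le> N"
    unfolding S_def Dr_def Dz_def N_def
    by (auto intro!: rect_integral_nonneg continuous_intros cont simp: zero_le_even_power)
  have "S \<le> sqrt M * N"
    unfolding S_def M_def N_def by (rule rect_integral_sixth_power_le_mixed) (use assms in auto)
  moreover have "M \<le> 4 * sqrt S * sqrt (Dr + Dz)"
  proof -
    have "M \<le> 4 * sqrt S * sqrt Dz"
      unfolding M_def S_def Dz_def by (rule rect_integral_abs_deriv_fourth_power_le[OF cont(1,3)])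
    also have "\<dots> \<le> 4 * sqrt S * sqrt (Dr + Dz)" using nonneg by (intro mult_left_mono) auto
    finally show ?thesis .
  qed
  moreover have "N \<le> 4 * sqrt S * sqrt (Dr + Dz)"
  proof -
    have "N \<le> 4 * sqrt S * sqrt Dr"
      unfolding N_def S_def Dr_def by (rule rect_integral_abs_deriv_fourth_power_le[OF cont(1,2)])
    also have "\<dots> \<le> 4 * sqrt S * sqrt (Dr + Dz)" using nonneg by (intro mult_left_mono) auto
    finally show ?thesis .
  qed
  moreover have "Dr + Dz = rect_integral R a (\<lambda>r z. ((gr r z)\<^sup>2 + (gz r z)\<^sup>2) * r)"
    unfolding Dr_def Dz_def by (subst rect_integral_add[symmetric]) (auto intro!: continuous_intros cont simp: algebra_simps)
  ultimately show ?thesis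
    using sixth_power_bootstrap[of S "Dr + Dz" N M] nonneg unfolding S_def by simp
qed

section \<open>The energy inequality at a fixed time\<close>

lemma mult_le_weighted_squares:
  fixes x y e :: real
  assumes "0 < e"
  shows "x * y \<le> e * x\<^sup>2 + y\<^sup>2 / (4 * e)"
proof -
  have "0 \<le> (2 * e * x - y)\<^sup>2 / (4 * e)" using assms by simp
  also have "\<dots> = e * x\<^sup>2 + y\<^sup>2 / (4 * e) - x * y"
    using assms by (simp add: field_simps power2_eq_square)
  finally show ?thesis by simp
qed

text \<open>The equation and the divergence condition are multiplied by r,
  so that they extend continuously to the axis; the terms w_r/r + 2 w_r/r become 3 w_r.\<close>

locale omega1_slice =
  fixes R a nu :: real
    and vr vr_r vz vz_z w w_r w_z w_rr w_zz w_t u u_z F :: "real \<Rightarrow> real \<Rightarrow> real"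
  assumes R_pos: "0 < R" and a_pos: "0 < a" and nu_pos: "0 < nu"
    and continuous: "rect_continuous R a vr" "rect_continuous R a vr_r" "rect_continuous R a vz"
      "rect_continuous R a vz_z" "rect_continuous R a w" "rect_continuous R a w_r" "rect_continuous R a w_z"
      "rect_continuous R a w_rr" "rect_continuous R a w_zz" "rect_continuous R a w_t"
      "rect_continuous R a u" "rect_continuous R a u_z" "rect_continuous R a F"
    and deriv_r: "\<And>r z. r \<in> {0..R} \<Longrightarrow> z \<in> {-a..a} \<Longrightarrow>
        ((\<lambda>s. vr s z) has_real_derivative vr_r r z) (at r within {0..R})"
      "\<And>r z. r \<in> {0..R} \<Longrightarrow> z \<in> {-a..a} \<Longrightarrow>
        ((\<lambda>s. w s z) has_real_derivative w_r r z) (at r within {0..R})"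
      "\<And>r z. r \<in> {0..R} \<Longrightarrow> z \<in> {-a..a} \<Longrightarrow>
        ((\<lambda>s. w_r s z) has_real_derivative w_rr r z) (at r within {0..R})"
    and deriv_z: "\<And>r z. r \<in> {0..R} \<Longrightarrow> z \<in> {-a..a} \<Longrightarrow>
        ((\<lambda>s. vz r s) has_real_derivative vz_z r z) (at z within {-a..a})"
      "\<And>r z. r \<in> {0..R} \<Longrightarrow> z \<in> {-a..a} \<Longrightarrow>
        ((\<lambda>s. w r s) has_real_derivative w_z r z) (at z within {-a..a})"
      "\<And>r z. r \<in> {0..R} \<Longrightarrow> z \<in> {-a..a} \<Longrightarrow>
        ((\<lambda>s. w_z r s) has_real_derivative w_zz r z) (at z within {-a..a})"
      "\<And>r z. r \<in> {0..R} \<Longrightarrow> z \<in> {-a..a} \<Longrightarrow>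
        ((\<lambda>s. u r s) has_real_derivative u_z r z) (at z within {-a..a})"
    and w_zero_R: "\<And>z. z \<in> {-a..a} \<Longrightarrow> w R z = 0"
    and w_zero_a: "\<And>r. r \<in> {0..R} \<Longrightarrow> w r a = 0" "\<And>r. r \<in> {0..R} \<Longrightarrow> w r (-a) = 0"
    and div_free: "\<And>r z. r \<in> {0..R} \<Longrightarrow> z \<in> {-a..a} \<Longrightarrow> vr r z + r * vr_r r z + r * vz_z r z = 0"
    and equation: "\<And>r z. r \<in> {0..R} \<Longrightarrow> z \<in> {-a..a} \<Longrightarrow>
      r * w_t r z + r * (vr r z * w_r r z + vz r z * w_z r z) - nu * (r * w_rr r z + 3 * w_r r z + r * w_zz r z)
      = r * (2 * u r z * u_z r z + F r z)"
begin

definition radial_flux :: "real \<Rightarrow> real \<Rightarrow> real" where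
  "radial_flux r z = nu * (r * w r z * w_r r z + (w r z)\<^sup>2) - r * vr r z * (w r z)\<^sup>2 / 2"

definition radial_flux_deriv :: "real \<Rightarrow> real \<Rightarrow> real" where
  "radial_flux_deriv r z = nu * (r * w r z * w_rr r z + 3 * w r z * w_r r z + r * (w_r r z)\<^sup>2)
    - (vr r z * (w r z)\<^sup>2 / 2 + r * vr_r r z * (w r z)\<^sup>2 / 2 + r * vr r z * w r z * w_r r z)"

definition axial_flux :: "real \<Rightarrow> real \<Rightarrow> real" where
  "axial_flux r z = nu * r * w r z * w_z r z - r * vz r z * (w r z)\<^sup>2 / 2 + r * (u r z)\<^sup>2 * w r z"

definition axial_flux_deriv :: "real \<Rightarrow> real \<Rightarrow> real" where
  "axial_flux_deriv r z = nu * (r * (w_z r z)\<^sup>2 + r * w r z * w_zz r z)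
    - (r * vz_z r z * (w r z)\<^sup>2 / 2 + r * vz r z * w r z * w_z r z)
    + (2 * r * u r z * u_z r z * w r z + r * (u r z)\<^sup>2 * w_z r z)"

lemma continuous_flux_derivs: "rect_continuous R a radial_flux_deriv" "rect_continuous R a axial_flux_deriv"
  unfolding radial_flux_deriv_def axial_flux_deriv_def by (auto intro!: continuous_intros continuous)

text \<open>The only boundary flux that survives is nu w^2 through the axis:
  elsewhere the fluxes carry a factor w, and on the axis the other terms carry a factor r.\<close>

lemma rect_integral_radial_flux_deriv:
  "rect_integral R a radial_flux_deriv = - nu * integral {-a..a} (\<lambda>z. (w 0 z)\<^sup>2)"
proof -
  have "rect_integral R a radial_flux_deriv = integral {-a..a} (\<lambda>z. radial_flux R z - radial_flux 0 z)"
    by (rule rect_integral_deriv_r)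
      (use R_pos continuous_flux_derivs in \<open>auto simp: radial_flux_def radial_flux_deriv_def power2_eq_square
        algebra_simps intro!: derivative_eq_intros deriv_r\<close>)
  also have "\<dots> = integral {-a..a} (\<lambda>z. - nu * (w 0 z)\<^sup>2)"
    by (rule integral_cong) (simp add: radial_flux_def w_zero_R)
  finally show ?thesis by simp
qed

lemma rect_integral_axial_flux_deriv: "rect_integral R a axial_flux_deriv = 0"
proof -
  have "rect_integral R a axial_flux_deriv = integral {0..R} (\<lambda>r. axial_flux r a - axial_flux r (-a))"
    by (rule rect_integral_deriv_z)
      (use a_pos continuous_flux_derivs in \<open>auto simp: axial_flux_def axial_flux_deriv_def power2_eq_square
        algebra_simps intro!: derivative_eq_intros deriv_z\<close>)
  also have "\<dots> = integral {0..R} (\<lambda>r. 0)"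
    by (rule integral_cong) (simp add: axial_flux_def w_zero_a)
  finally show ?thesis by simp
qed

text \<open>Multiply the equation by w and the divergence condition by w^2/2.\<close>

lemma energy_density_eq_flux_derivs:
  assumes "r \<in> {0..R}" "z \<in> {-a..a}"
  shows "w r z * w_t r z * r + nu * (((w_r r z)\<^sup>2 + (w_z r z)\<^sup>2) * r) + (u r z)\<^sup>2 * w_z r z * r
      - w r z * F r z * r = radial_flux_deriv r z + axial_flux_deriv r z"
proof -
  have "w r z * w_t r z * r + nu * (((w_r r z)\<^sup>2 + (w_z r z)\<^sup>2) * r) + (u r z)\<^sup>2 * w_z r z * r
      - w r z * F r z * r - (radial_flux_deriv r z + axial_flux_deriv r z)
    = w r z * (r * w_t r z + r * (vr r z * w_r r z + vz r z * w_z r z)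
        - nu * (r * w_rr r z + 3 * w_r r z + r * w_zz r z) - r * (2 * u r z * u_z r z + F r z))
      + (w r z)\<^sup>2 / 2 * (vr r z + r * vr_r r z + r * vz_z r z)"
    unfolding radial_flux_deriv_def axial_flux_deriv_def by (simp add: algebra_simps power2_eq_square)
  then show ?thesis using equation[OF assms] div_free[OF assms] by simp
qed

lemma energy_identity:
  "rect_integral R a (\<lambda>r z. w r z * w_t r z * r)
    + nu * rect_integral R a (\<lambda>r z. ((w_r r z)\<^sup>2 + (w_z r z)\<^sup>2) * r)
    + nu * integral {-a..a} (\<lambda>z. (w 0 z)\<^sup>2)
   = rect_integral R a (\<lambda>r z. w r z * F r z * r) - rect_integral R a (\<lambda>r z. (u r z)\<^sup>2 * w_z r z * r)"
proof -
  have cont_terms: "rect_continuous R a (\<lambda>r z. w r z * w_t r z * r)"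
    "rect_continuous R a (\<lambda>r z. nu * (((w_r r z)\<^sup>2 + (w_z r z)\<^sup>2) * r))"
    "rect_continuous R a (\<lambda>r z. (u r z)\<^sup>2 * w_z r z * r)" "rect_continuous R a (\<lambda>r z. w r z * F r z * r)"
    by (auto intro!: continuous_intros continuous)
  have "rect_integral R a (\<lambda>r z. w r z * w_t r z * r + nu * (((w_r r z)\<^sup>2 + (w_z r z)\<^sup>2) * r)
        + (u r z)\<^sup>2 * w_z r z * r - w r z * F r z * r)
      = rect_integral R a (\<lambda>r z. radial_flux_deriv r z + axial_flux_deriv r z)"
    by (rule rect_integral_cong) (rule energy_density_eq_flux_derivs)
  also have "\<dots> = - nu * integral {-a..a} (\<lambda>z. (w 0 z)\<^sup>2)"
    by (simp add: rect_integral_add continuous_flux_derivs rect_integral_radial_flux_deriv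
        rect_integral_axial_flux_deriv)
  finally show ?thesis
    by (simp add: rect_integral_add rect_integral_diff continuous_on_add cont_terms rect_integral_cmult)
qed

lemma convection_bound:
  "- rect_integral R a (\<lambda>r z. (u r z)\<^sup>2 * w_z r z * r)
    \<le> nu / 4 * rect_integral R a (\<lambda>r z. ((w_r r z)\<^sup>2 + (w_z r z)\<^sup>2) * r)
      + 1 / nu * rect_integral R a (\<lambda>r z. (u r z)^4 * r)"
proof -
  have "- rect_integral R a (\<lambda>r z. (u r z)\<^sup>2 * w_z r z * r) = rect_integral R a (\<lambda>r z. - ((u r z)\<^sup>2 * w_z r z * r))"
    using rect_integral_cmult[of R a "-1"] by simp
  also have "\<dots> \<le> rect_integral R a (\<lambda>r z. nu / 4 * (((w_r r z)\<^sup>2 + (w_z r z)\<^sup>2) * r) + 1 / nu * ((u r z)^4 * r))"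
  proof (rule rect_integral_mono)
    fix r z assume rz: "r \<in> {0..R}" "z \<in> {-a..a}"
    have "w_z r z * - (u r z)\<^sup>2 \<le> nu / 4 * (w_z r z)\<^sup>2 + ((u r z)\<^sup>2)\<^sup>2 / (4 * (nu / 4))"
      using mult_le_weighted_squares[of "nu / 4" "w_z r z" "- (u r z)\<^sup>2"] nu_pos by simp
    also have "\<dots> \<le> nu / 4 * ((w_r r z)\<^sup>2 + (w_z r z)\<^sup>2) + 1 / nu * (u r z)^4"
      using nu_pos by (simp add: distrib_left flip: power_mult)
    finally show "- ((u r z)\<^sup>2 * w_z r z * r) \<le> nu / 4 * (((w_r r z)\<^sup>2 + (w_z r z)\<^sup>2) * r) + 1 / nu * ((u r z)^4 * r)"
      using rz mult_right_mono by (fastforce simp: algebra_simps)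
  qed (use nu_pos in \<open>auto intro!: continuous_intros continuous\<close>)
  also have "\<dots> = nu / 4 * rect_integral R a (\<lambda>r z. ((w_r r z)\<^sup>2 + (w_z r z)\<^sup>2) * r)
      + 1 / nu * rect_integral R a (\<lambda>r z. (u r z)^4 * r)"
    by (rule rect_integral_lincomb) (auto intro!: continuous_intros continuous)
  finally show ?thesis .
qed

lemma sixth_root_rect_integral_sixth_power_le:
  "rect_integral R a (\<lambda>r z. (w r z)^6 * r) powr (1/6)
    \<le> 4 * sqrt (rect_integral R a (\<lambda>r z. ((w_r r z)\<^sup>2 + (w_z r z)\<^sup>2) * r))"
proof -
  define D where "D = rect_integral R a (\<lambda>r z. ((w_r r z)\<^sup>2 + (w_z r z)\<^sup>2) * r)"
  define S where "S = rect_integral R a (\<lambda>r z. (w r z)^6 * r)"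
  have nonneg: "0 \<le> D" "0 \<le> S"
    unfolding D_def S_def by (auto intro!: rect_integral_nonneg continuous_intros continuous simp: zero_le_even_power)
  have "(S powr (1/6))^6 = S"
    using nonneg by (cases "S = 0") (simp_all add: powr_power)
  also have "\<dots> \<le> 4096 * D^3"
    unfolding S_def D_def
    by (rule rect_integral_sixth_power_le) (use R_pos w_zero_R w_zero_a in \<open>auto intro: continuous deriv_r deriv_z\<close>)
  also have "4096 * D^3 = (4 * sqrt D)^6"
    using nonneg power_mult[of "sqrt D" 2 3] by (simp add: power_mult_distrib)
  finally have "(S powr (1/6))^6 \<le> (4 * sqrt D)^6" .
  then show ?thesis
    using power_mono_iff[of "S powr (1/6)" "4 * sqrt D" 6] nonneg unfolding S_def D_def by simp
qed

lemma forcing_bound: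
  "rect_integral R a (\<lambda>r z. w r z * F r z * r)
    \<le> nu / 4 * rect_integral R a (\<lambda>r z. ((w_r r z)\<^sup>2 + (w_z r z)\<^sup>2) * r)
      + 16 / nu * rect_integral R a (\<lambda>r z. \<bar>F r z\<bar> powr (6/5) * r) powr (5/3)"
proof -
  define D where "D = rect_integral R a (\<lambda>r z. ((w_r r z)\<^sup>2 + (w_z r z)\<^sup>2) * r)"
  define S where "S = rect_integral R a (\<lambda>r z. (w r z)^6 * r)"
  define \<Phi> where "\<Phi> = rect_integral R a (\<lambda>r z. \<bar>F r z\<bar> powr (6/5) * r)"
  have nonneg: "0 \<le> D" "0 \<le> \<Phi>"
    unfolding D_def \<Phi>_def by (auto intro!: rect_integral_nonneg continuous_intros continuous_on_powr' continuous)
  have "rect_integral R a (\<lambda>r z. w r z * F r z * r) \<le> rect_integral R a (\<lambda>r z. \<bar>F r z\<bar> * \<bar>w r z\<bar> * r)"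
    by (rule rect_integral_mono)
      (auto intro!: continuous_intros continuous mult_left_mono simp: abs_mult[symmetric] mult.commute)
  also have "\<dots> \<le> \<Phi> powr (5/6) * S powr (1/6)"
  proof -
    have "integral ({0..R} \<times> {-a..a}) (\<lambda>p. \<bar>F (fst p) (snd p)\<bar> * \<bar>w (fst p) (snd p)\<bar> * fst p)
        \<le> integral ({0..R} \<times> {-a..a}) (\<lambda>p. \<bar>F (fst p) (snd p)\<bar> powr (6/5) * fst p) powr (1 / (6/5))
          * integral ({0..R} \<times> {-a..a}) (\<lambda>p. \<bar>w (fst p) (snd p)\<bar> powr 6 * fst p) powr (1/6)"
      by (rule integral_Holder_weighted)
        (auto intro!: integrable_on_rect continuous_intros continuous_on_powr' continuous)
    then show ?thesis unfolding rect_integral_def \<Phi>_def S_def by (simp add: power_even_abs)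
  qed
  also have "\<dots> \<le> \<Phi> powr (5/6) * (4 * sqrt D)"
    using sixth_root_rect_integral_sixth_power_le unfolding S_def D_def by (intro mult_left_mono) auto
  also have "\<dots> = sqrt D * (4 * \<Phi> powr (5/6))" by simp
  also have "\<dots> \<le> nu / 4 * (sqrt D)\<^sup>2 + (4 * \<Phi> powr (5/6))\<^sup>2 / (4 * (nu / 4))"
    using mult_le_weighted_squares[of "nu / 4" "sqrt D" "4 * \<Phi> powr (5/6)"] nu_pos by simp
  also have "\<dots> = nu / 4 * D + 16 / nu * \<Phi> powr (5/3)"
    using nonneg by (simp add: power_mult_distrib power2_eq_square flip: powr_add)
  finally show ?thesis unfolding D_def \<Phi>_def .
qed

lemma energy_inequality:
  "rect_integral R a (\<lambda>r z. w r z * w_t r z * r)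
    \<le> - nu / 2 * rect_integral R a (\<lambda>r z. ((w_r r z)\<^sup>2 + (w_z r z)\<^sup>2) * r)
      - nu * integral {-a..a} (\<lambda>z. (w 0 z)\<^sup>2)
      + 1 / nu * rect_integral R a (\<lambda>r z. (u r z)^4 * r)
      + 16 / nu * rect_integral R a (\<lambda>r z. \<bar>F r z\<bar> powr (6/5) * r) powr (5/3)"
  using energy_identity convection_bound forcing_bound by linarith

end

section \<open>Integration in time\<close>

abbreviation stbox_continuous :: "real \<Rightarrow> real \<Rightarrow> real \<Rightarrow> (real \<Rightarrow> real \<Rightarrow> real \<Rightarrow> real) \<Rightarrow> bool" where
  "stbox_continuous R a t h \<equiv> continuous_on (stbox R a t) (\<lambda>x. h (fst x) (fst (snd x)) (snd (snd x)))"

lemma stbox_continuous_slice: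
  assumes "stbox_continuous R a t h" "\<tau> \<in> {0..t}"
  shows "rect_continuous R a (\<lambda>r z. h r z \<tau>)"
proof -
  have "continuous_on ({0..R} \<times> {-a..a}) ((\<lambda>x. h (fst x) (fst (snd x)) (snd (snd x))) \<circ> (\<lambda>p. (fst p, snd p, \<tau>)))"
    by (rule continuous_on_compose)
      (use assms(2) in \<open>auto intro!: continuous_intros continuous_on_subset[OF assms(1)] simp: stbox_def\<close>)
  then show ?thesis by (simp add: o_def)
qed

lemma continuous_on_rect_integral_time:
  assumes "stbox_continuous R a t h"
  shows "continuous_on {0..t} (\<lambda>\<tau>. rect_integral R a (\<lambda>r z. h r z \<tau>))"
proof -
  have "continuous_on ({0..t} \<times> cbox (0, -a) (R, a)) ((\<lambda>x. h (fst x) (fst (snd x)) (snd (snd x)))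
      \<circ> (\<lambda>(\<tau>, p). (fst p, snd p, \<tau>)))"
    by (rule continuous_on_compose)
      (auto simp: split_beta' stbox_def rect_eq_cbox[symmetric] intro!: continuous_intros continuous_on_subset[OF assms])
  then have "continuous_on ({0..t} \<times> cbox (0, -a) (R, a)) (\<lambda>(\<tau>, p). h (fst p) (snd p) \<tau>)"
    by (simp add: o_def split_beta')
  from integral_continuous_on_param[OF this] show ?thesis
    unfolding rect_integral_def rect_eq_cbox .
qed

lemma continuous_on_axis_integral_time:
  assumes "stbox_continuous R a t h" "0 \<le> R"
  shows "continuous_on {0..t} (\<lambda>\<tau>. integral {-a..a} (\<lambda>z. h 0 z \<tau>))"
proof -
  have "continuous_on ({0..t} \<times> cbox (-a) a) ((\<lambda>x. h (fst x) (fst (snd x)) (snd (snd x)))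
      \<circ> (\<lambda>(\<tau>, z). (0, z, \<tau>)))"
    by (rule continuous_on_compose)
      (use assms(2) in \<open>auto simp: split_beta' stbox_def intro!: continuous_intros continuous_on_subset[OF assms(1)]\<close>)
  then have "continuous_on ({0..t} \<times> cbox (-a) a) (\<lambda>(\<tau>, z). h 0 z \<tau>)"
    by (simp add: o_def split_beta')
  from integral_continuous_on_param[OF this] show ?thesis by simp
qed

lemma has_real_derivative_rect_integral:
  assumes cont: "stbox_continuous R a t h_t"
    and deriv: "\<And>r z s. r \<in> {0..R} \<Longrightarrow> z \<in> {-a..a} \<Longrightarrow> s \<in> {0..t} \<Longrightarrow>
      ((\<lambda>s. h r z s) has_real_derivative h_t r z s) (at s within {0..t})"
    and integrable: "\<And>s. s \<in> {0..t} \<Longrightarrow> rect_continuous R a (\<lambda>r z. h r z s)"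
    and "\<tau> \<in> {0..t}"
  shows "((\<lambda>s. rect_integral R a (\<lambda>r z. h r z s)) has_real_derivative rect_integral R a (\<lambda>r z. h_t r z \<tau>))
    (at \<tau> within {0..t})"
  unfolding rect_integral_def rect_eq_cbox
proof (rule leibniz_rule_field_derivative)
  fix s p assume "s \<in> {0..t}" "p \<in> cbox (0, -a) (R, a)"
  then show "((\<lambda>s. h (fst p) (snd p) s) has_field_derivative h_t (fst p) (snd p) s) (at s within {0..t})"
    by (intro deriv) (auto simp: rect_eq_cbox[symmetric])
next
  fix s assume "s \<in> {0..t}"
  from integrable_on_rect[OF integrable[OF this]]
  show "(\<lambda>p. h (fst p) (snd p) s) integrable_on cbox (0, -a) (R, a)" by (simp add: rect_eq_cbox)
next
  have "continuous_on ({0..t} \<times> cbox (0, -a) (R, a)) ((\<lambda>x. h_t (fst x) (fst (snd x)) (snd (snd x)))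
      \<circ> (\<lambda>(s, p). (fst p, snd p, s)))"
    by (rule continuous_on_compose)
      (auto simp: split_beta' stbox_def rect_eq_cbox[symmetric] intro!: continuous_intros continuous_on_subset[OF cont])
  then show "continuous_on ({0..t} \<times> cbox (0, -a) (R, a)) (\<lambda>(s, p). h_t (fst p) (snd p) s)"
    by (simp add: o_def split_beta')
qed (use \<open>\<tau> \<in> {0..t}\<close> in auto)

lemma stbox_zero_by_continuity:
  assumes "0 < R" "0 < a" "0 < t" "stbox_continuous R a t h"
    and "\<And>r z \<tau>. 0 < r \<Longrightarrow> r < R \<Longrightarrow> -a < z \<Longrightarrow> z < a \<Longrightarrow> 0 < \<tau> \<Longrightarrow> \<tau> < t \<Longrightarrow> h r z \<tau> = 0"
    and "r \<in> {0..R}" "z \<in> {-a..a}" "\<tau> \<in> {0..t}"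
  shows "h r z \<tau> = 0"
proof -
  define B where "B = {0<..<R} \<times> {-a<..<a} \<times> {0<..<t}"
  have closure: "closure B = stbox R a t"
    using assms(1-3) unfolding B_def stbox_def by (simp add: closure_Times)
  have "(\<lambda>x. h (fst x) (fst (snd x)) (snd (snd x))) (r, z, \<tau>) = 0"
  proof (rule continuous_constant_on_closure[where S = B])
    show "continuous_on (closure B) (\<lambda>x. h (fst x) (fst (snd x)) (snd (snd x)))"
      unfolding closure by (rule assms(4))
    show "(r, z, \<tau>) \<in> closure B" unfolding closure using assms(6-8) by (simp add: stbox_def)
  qed (use assms(5) in \<open>auto simp: B_def\<close>)
  then show ?thesis by simp
qed

lemma omega1_problem_continuous:
  assumes "omega1_problem R a nu t vr vr_r vz vz_z w w_r w_z w_rr w_zz w_t u u_z F"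
  shows "stbox_continuous R a t vr" "stbox_continuous R a t vr_r" "stbox_continuous R a t vz"
    "stbox_continuous R a t vz_z" "stbox_continuous R a t w" "stbox_continuous R a t w_r"
    "stbox_continuous R a t w_z" "stbox_continuous R a t w_rr" "stbox_continuous R a t w_zz"
    "stbox_continuous R a t w_t" "stbox_continuous R a t u" "stbox_continuous R a t u_z"
    "stbox_continuous R a t F"
  using assms unfolding omega1_problem_def by (simp_all add: split_beta')

text \<open>The divergence condition and the equation are assumed only in the open space-time box;
  by continuity they hold on the closed box in the form multiplied by r.\<close>

lemma omega1_problem_div_free:
  assumes pos: "0 < R" "0 < a" "0 < t"
    and P: "omega1_problem R a nu t vr vr_r vz vz_z w w_r w_z w_rr w_zz w_t u u_z F"
    and box: "r \<in> {0..R}" "z \<in> {-a..a}" "\<tau> \<in> {0..t}"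
  shows "vr r z \<tau> + r * vr_r r z \<tau> + r * vz_z r z \<tau> = 0"
proof (rule stbox_zero_by_continuity[OF pos _ _ box, where h = "\<lambda>r z \<tau>. vr r z \<tau> + r * vr_r r z \<tau> + r * vz_z r z \<tau>"])
  show "stbox_continuous R a t (\<lambda>r z \<tau>. vr r z \<tau> + r * vr_r r z \<tau> + r * vz_z r z \<tau>)"
    using omega1_problem_continuous[OF P] by (auto intro!: continuous_intros)
  fix r z \<tau> assume open_box: "0 < r" "r < R" "- a < z" "z < a" "0 < \<tau>" "\<tau> < t"
  then have "vr_r r z \<tau> + vr r z \<tau> / r + vz_z r z \<tau> = 0"
    using P unfolding omega1_problem_def by auto
  then show "vr r z \<tau> + r * vr_r r z \<tau> + r * vz_z r z \<tau> = 0"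
    using open_box by (simp add: field_simps)
qed

lemma omega1_problem_equation:
  assumes pos: "0 < R" "0 < a" "0 < t"
    and P: "omega1_problem R a nu t vr vr_r vz vz_z w w_r w_z w_rr w_zz w_t u u_z F"
    and box: "r \<in> {0..R}" "z \<in> {-a..a}" "\<tau> \<in> {0..t}"
  shows "r * w_t r z \<tau> + r * (vr r z \<tau> * w_r r z \<tau> + vz r z \<tau> * w_z r z \<tau>)
      - nu * (r * w_rr r z \<tau> + 3 * w_r r z \<tau> + r * w_zz r z \<tau>) = r * (2 * u r z \<tau> * u_z r z \<tau> + F r z \<tau>)"
proof -
  have "r * w_t r z \<tau> + r * (vr r z \<tau> * w_r r z \<tau> + vz r z \<tau> * w_z r z \<tau>)
      - nu * (r * w_rr r z \<tau> + 3 * w_r r z \<tau> + r * w_zz r z \<tau>) - r * (2 * u r z \<tau> * u_z r z \<tau> + F r z \<tau>) = 0"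
  proof (rule stbox_zero_by_continuity[OF pos _ _ box,
        where h = "\<lambda>r z \<tau>. r * w_t r z \<tau> + r * (vr r z \<tau> * w_r r z \<tau> + vz r z \<tau> * w_z r z \<tau>)
          - nu * (r * w_rr r z \<tau> + 3 * w_r r z \<tau> + r * w_zz r z \<tau>) - r * (2 * u r z \<tau> * u_z r z \<tau> + F r z \<tau>)"])
    show "stbox_continuous R a t (\<lambda>r z \<tau>. r * w_t r z \<tau> + r * (vr r z \<tau> * w_r r z \<tau> + vz r z \<tau> * w_z r z \<tau>)
        - nu * (r * w_rr r z \<tau> + 3 * w_r r z \<tau> + r * w_zz r z \<tau>) - r * (2 * u r z \<tau> * u_z r z \<tau> + F r z \<tau>))"
      using omega1_problem_continuous[OF P] by (auto intro!: continuous_intros)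
    fix r z \<tau> assume open_box: "0 < r" "r < R" "- a < z" "z < a" "0 < \<tau>" "\<tau> < t"
    then have "w_t r z \<tau> + (vr r z \<tau> * w_r r z \<tau> + vz r z \<tau> * w_z r z \<tau>)
        - nu * (w_rr r z \<tau> + w_r r z \<tau> / r + w_zz r z \<tau> + 2 / r * w_r r z \<tau>)
        = 2 * u r z \<tau> * u_z r z \<tau> + F r z \<tau>"
      using P unfolding omega1_problem_def by auto
    then show "r * w_t r z \<tau> + r * (vr r z \<tau> * w_r r z \<tau> + vz r z \<tau> * w_z r z \<tau>)
        - nu * (r * w_rr r z \<tau> + 3 * w_r r z \<tau> + r * w_zz r z \<tau>) - r * (2 * u r z \<tau> * u_z r z \<tau> + F r z \<tau>) = 0"
      using open_box by (simp add: field_simps)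
  qed
  then show ?thesis by simp
qed

lemma omega1_problem_slice:
  assumes pos: "0 < R" "0 < a" "0 < nu" "0 < t"
    and P: "omega1_problem R a nu t vr vr_r vz vz_z w w_r w_z w_rr w_zz w_t u u_z F" and \<tau>: "\<tau> \<in> {0..t}"
  shows "omega1_slice R a nu (\<lambda>r z. vr r z \<tau>) (\<lambda>r z. vr_r r z \<tau>) (\<lambda>r z. vz r z \<tau>) (\<lambda>r z. vz_z r z \<tau>)
    (\<lambda>r z. w r z \<tau>) (\<lambda>r z. w_r r z \<tau>) (\<lambda>r z. w_z r z \<tau>) (\<lambda>r z. w_rr r z \<tau>) (\<lambda>r z. w_zz r z \<tau>)
    (\<lambda>r z. w_t r z \<tau>) (\<lambda>r z. u r z \<tau>) (\<lambda>r z. u_z r z \<tau>) (\<lambda>r z. F r z \<tau>)"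
proof -
  note deriv = P[unfolded omega1_problem_def, THEN conjunct1, rule_format]
  have w_zero_R: "w R z \<tau> = 0" if "z \<in> {-a..a}" for z
    using P \<tau> that unfolding omega1_problem_def by simp
  have w_zero_a: "w r a \<tau> = 0 \<and> w r (-a) \<tau> = 0" if "r \<in> {0..R}" for r
    using P \<tau> that unfolding omega1_problem_def by simp
  show ?thesis
    by unfold_locales
      (use pos \<tau> deriv w_zero_R w_zero_a omega1_problem_continuous[OF P]
        omega1_problem_div_free[OF pos(1,2,4) P] omega1_problem_equation[OF pos(1,2,4) P]
        in \<open>auto intro: stbox_continuous_slice\<close>)
qed

lemma omega1_problem_energy_change:
  assumes "0 < t" and P: "omega1_problem R a nu t vr vr_r vz vz_z w w_r w_z w_rr w_zz w_t u u_z F"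
  shows "rect_integral R a (\<lambda>r z. (w r z t)\<^sup>2 * r) - rect_integral R a (\<lambda>r z. (w r z 0)\<^sup>2 * r)
    = integral {0..t} (\<lambda>\<tau>. 2 * rect_integral R a (\<lambda>r z. w r z \<tau> * w_t r z \<tau> * r))"
proof (rule fundamental_theorem_of_calculus_real[symmetric])
  fix \<tau> assume \<tau>: "\<tau> \<in> {0..t}"
  have "((\<lambda>s. rect_integral R a (\<lambda>r z. (w r z s)\<^sup>2 * r)) has_real_derivative
      rect_integral R a (\<lambda>r z. 2 * w r z \<tau> * w_t r z \<tau> * r)) (at \<tau> within {0..t})"
    by (rule has_real_derivative_rect_integral[OF _ _ _ \<tau>])
      (use omega1_problem_continuous[OF P] P in \<open>auto simp: omega1_problem_def
        intro!: continuous_intros stbox_continuous_slice derivative_eq_intros\<close>)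
  then show "((\<lambda>s. rect_integral R a (\<lambda>r z. (w r z s)\<^sup>2 * r)) has_real_derivative
      2 * rect_integral R a (\<lambda>r z. w r z \<tau> * w_t r z \<tau> * r)) (at \<tau> within {0..t})"
    by (simp add: mult.assoc rect_integral_cmult)
qed (use \<open>0 < t\<close> in simp)

lemma omega1_problem_energy_inequality:
  assumes pos: "0 < R" "0 < a" "0 < nu" "0 < t"
    and P: "omega1_problem R a nu t vr vr_r vz vz_z w w_r w_z w_rr w_zz w_t u u_z F"
  defines "E \<equiv> \<lambda>\<tau>. rect_integral R a (\<lambda>r z. (w r z \<tau>)\<^sup>2 * r)"
    and "D \<equiv> \<lambda>\<tau>. rect_integral R a (\<lambda>r z. ((w_r r z \<tau>)\<^sup>2 + (w_z r z \<tau>)\<^sup>2) * r)"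
    and "Z \<equiv> \<lambda>\<tau>. integral {-a..a} (\<lambda>z. (w 0 z \<tau>)\<^sup>2)"
    and "U \<equiv> \<lambda>\<tau>. rect_integral R a (\<lambda>r z. (u r z \<tau>)^4 * r)"
    and "\<Phi> \<equiv> \<lambda>\<tau>. rect_integral R a (\<lambda>r z. \<bar>F r z \<tau>\<bar> powr (6/5) * r)"
  shows "E t - E 0 \<le> - nu * integral {0..t} D - 2 * nu * integral {0..t} Z
    + 2 / nu * integral {0..t} U + 32 / nu * integral {0..t} (\<lambda>\<tau>. \<Phi> \<tau> powr (5/3))"
proof -
  note cont = omega1_problem_continuous[OF P]
  define J where "J \<tau> = rect_integral R a (\<lambda>r z. w r z \<tau> * w_t r z \<tau> * r)" for \<tau>
  have cont_time: "continuous_on {0..t} J" "continuous_on {0..t} D" "continuous_on {0..t} U"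
      "continuous_on {0..t} \<Phi>"
    unfolding J_def D_def U_def \<Phi>_def
    by (rule continuous_on_rect_integral_time; auto intro!: continuous_intros continuous_on_powr' cont)+
  have cont_Z: "continuous_on {0..t} Z"
    unfolding Z_def using pos(1)
    by (intro continuous_on_axis_integral_time[of R a t "\<lambda>r z \<tau>. (w r z \<tau>)\<^sup>2"]) (auto intro!: continuous_intros cont)
  have "0 \<le> \<Phi> \<tau>" if "\<tau> \<in> {0..t}" for \<tau>
    unfolding \<Phi>_def
    by (rule rect_integral_nonneg) (auto intro!: continuous_intros continuous_on_powr' stbox_continuous_slice[OF _ that] cont)
  then have cont_\<Phi>_powr: "continuous_on {0..t} (\<lambda>\<tau>. \<Phi> \<tau> powr (5/3))"
    by (intro continuous_on_powr' cont_time) auto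
  have "E t - E 0 = integral {0..t} (\<lambda>\<tau>. 2 * J \<tau>)"
    unfolding E_def J_def by (rule omega1_problem_energy_change[OF pos(4) P])
  also have "\<dots> \<le> integral {0..t} (\<lambda>\<tau>. - nu * D \<tau> - 2 * nu * Z \<tau> + 2 / nu * U \<tau> + 32 / nu * \<Phi> \<tau> powr (5/3))"
  proof (rule integral_le)
    fix \<tau> assume \<tau>: "\<tau> \<in> {0..t}"
    interpret omega1_slice R a nu "\<lambda>r z. vr r z \<tau>" "\<lambda>r z. vr_r r z \<tau>" "\<lambda>r z. vz r z \<tau>" "\<lambda>r z. vz_z r z \<tau>"
      "\<lambda>r z. w r z \<tau>" "\<lambda>r z. w_r r z \<tau>" "\<lambda>r z. w_z r z \<tau>" "\<lambda>r z. w_rr r z \<tau>" "\<lambda>r z. w_zz r z \<tau>"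
      "\<lambda>r z. w_t r z \<tau>" "\<lambda>r z. u r z \<tau>" "\<lambda>r z. u_z r z \<tau>" "\<lambda>r z. F r z \<tau>"
      by (rule omega1_problem_slice[OF pos P \<tau>])
    show "2 * J \<tau> \<le> - nu * D \<tau> - 2 * nu * Z \<tau> + 2 / nu * U \<tau> + 32 / nu * \<Phi> \<tau> powr (5/3)"
      using energy_inequality unfolding J_def D_def Z_def U_def \<Phi>_def by simp
  qed (use pos cont_time cont_Z cont_\<Phi>_powr in \<open>auto intro!: integrable_continuous_interval continuous_intros\<close>)
  also have "\<dots> = - nu * integral {0..t} D - 2 * nu * integral {0..t} Z
    + 2 / nu * integral {0..t} U + 32 / nu * integral {0..t} (\<lambda>\<tau>. \<Phi> \<tau> powr (5/3))"
    by (intro integral_unique has_integral_add has_integral_diff has_integral_mult_right integrable_integral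
        integrable_continuous_interval cont_time cont_Z cont_\<Phi>_powr)
  finally show ?thesis .
qed

text \<open>cyl_int carries the factor 2 pi of the angular integration; the constants in front of
  the axis term and of the initial energy are weakened using pi > 1.\<close>

lemma energy_bound_times_two_pi:
  fixes E1 E0 D Z U P1 P2 nu :: real
  assumes nu: "0 < nu" and "0 \<le> E0" "0 \<le> Z" "P1 \<le> P2"
    and energy: "E1 - E0 \<le> - nu * D - 2 * nu * Z + 2 / nu * U + 32 / nu * P1"
  shows "1/2 * (2 * pi * E1) + nu/2 * (2 * pi * D) + nu * Z \<le> 1/nu * (2 * pi * U) + 32 * pi / nu * P2 + 2 * pi * E0"
proof -
  have "pi * (E1 - E0) \<le> pi * (- nu * D - 2 * nu * Z + 2 / nu * U + 32 / nu * P1)"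
    using energy by (intro mult_left_mono) auto
  moreover have "nu * Z \<le> 2 * pi * (nu * Z)"
    using mult_right_mono[of 1 "2 * pi" "nu * Z"] assms pi_gt3 by simp
  moreover have "pi * E0 \<le> 2 * pi * E0" using assms pi_gt3 by simp
  moreover have "32 * pi / nu * P1 \<le> 32 * pi / nu * P2" using assms by (intro mult_left_mono) auto
  ultimately show ?thesis by (simp add: algebra_simps add_divide_distrib diff_divide_distrib)
qed

lemma omega1_problem_energy_estimate:
  assumes pos: "0 < R" "0 < a" "0 < nu" "0 < t"
    and P: "omega1_problem R a nu t vr vr_r vz vz_z w w_r w_z w_rr w_zz w_t u u_z F"
  shows "1/2 * cyl_int R a (\<lambda>r z. (w r z t)^2)
      + nu/2 * integral {0..t} (\<lambda>\<tau>. cyl_int R a (\<lambda>r z. (w_r r z \<tau>)^2 + (w_z r z \<tau>)^2))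
      + nu * integral {0..t} (\<lambda>\<tau>. integral {-a..a} (\<lambda>z. (w 0 z \<tau>)^2))
    \<le> 1/nu * integral {0..t} (\<lambda>\<tau>. cyl_int R a (\<lambda>r z. (u r z \<tau>)^4))
      + 32 * pi / nu * integral {0..t} (\<lambda>\<tau>. (cyl_int R a (\<lambda>r z. \<bar>F r z \<tau>\<bar> powr (6/5))) powr (5/3))
      + cyl_int R a (\<lambda>r z. (w r z 0)^2)"
proof -
  note cont = omega1_problem_continuous[OF P]
  define \<Phi> where "\<Phi> \<tau> = rect_integral R a (\<lambda>r z. \<bar>F r z \<tau>\<bar> powr (6/5) * r)" for \<tau>
  have E0: "0 \<le> rect_integral R a (\<lambda>r z. (w r z 0)\<^sup>2 * r)"
    using pos(4) by (intro rect_integral_nonneg) (auto intro!: continuous_intros stbox_continuous_slice cont)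
  have Z: "0 \<le> integral {0..t} (\<lambda>\<tau>. integral {-a..a} (\<lambda>z. (w 0 z \<tau>)\<^sup>2))"
  proof (rule integral_nonneg)
    show "(\<lambda>\<tau>. integral {-a..a} (\<lambda>z. (w 0 z \<tau>)\<^sup>2)) integrable_on {0..t}"
      using pos(1) by (intro integrable_continuous_interval
          continuous_on_axis_integral_time[of R a t "\<lambda>r z \<tau>. (w r z \<tau>)\<^sup>2"]) (auto intro!: continuous_intros cont)
    fix \<tau> assume "\<tau> \<in> {0..t}"
    then have "continuous_on {-a..a} (\<lambda>z. w 0 z \<tau>)"
      using rect_continuous_slice_z[OF stbox_continuous_slice[OF cont(5)], of \<tau> 0] pos(1) by simp
    then show "0 \<le> integral {-a..a} (\<lambda>z. (w 0 z \<tau>)\<^sup>2)"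
      by (auto intro!: integral_nonneg integrable_continuous_interval continuous_intros)
  qed
  have forcing: "integral {0..t} (\<lambda>\<tau>. \<Phi> \<tau> powr (5/3)) \<le> integral {0..t} (\<lambda>\<tau>. (2 * pi * \<Phi> \<tau>) powr (5/3))"
  proof (rule integral_le)
    have nonneg: "0 \<le> \<Phi> \<tau>" if "\<tau> \<in> {0..t}" for \<tau>
      unfolding \<Phi>_def
      by (rule rect_integral_nonneg) (auto intro!: continuous_intros continuous_on_powr' stbox_continuous_slice[OF _ that] cont)
    have "continuous_on {0..t} \<Phi>"
      unfolding \<Phi>_def by (rule continuous_on_rect_integral_time) (auto intro!: continuous_intros continuous_on_powr' cont)
    with nonneg show "(\<lambda>\<tau>. \<Phi> \<tau> powr (5/3)) integrable_on {0..t}" "(\<lambda>\<tau>. (2 * pi * \<Phi> \<tau>) powr (5/3)) integrable_on {0..t}"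
      by (auto intro!: integrable_continuous_interval continuous_on_powr' continuous_on_mult_left)
    show "\<Phi> \<tau> powr (5/3) \<le> (2 * pi * \<Phi> \<tau>) powr (5/3)" if "\<tau> \<in> {0..t}" for \<tau>
      using nonneg[OF that] mult_right_mono[of 1 "2 * pi" "\<Phi> \<tau>"] pi_gt3 by (intro powr_mono2) auto
  qed
  show ?thesis
    using energy_bound_times_two_pi[OF pos(3) E0 Z forcing[unfolded \<Phi>_def] omega1_problem_energy_inequality[OF pos P]]
    unfolding cyl_int_eq_rect_integral \<Phi>_def by simp
qed

theorem lemma3p1:
  fixes R a nu :: real
  assumes "0 < R" and "0 < a" and "0 < nu"
  shows "\<exists>c>0. \<forall>t vr vr_r vz vz_z w w_r w_z w_rr w_zz w_t u u_z F.
    0 < t \<and> omega1_problem R a nu t vr vr_r vz vz_z w w_r w_z w_rr w_zz w_t u u_z F \<longrightarrow>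
      1/2 * cyl_int R a (\<lambda>r z. (w r z t)^2)
      + nu/2 * integral {0..t} (\<lambda>\<tau>. cyl_int R a (\<lambda>r z. (w_r r z \<tau>)^2 + (w_z r z \<tau>)^2))
      + nu * integral {0..t} (\<lambda>\<tau>. integral {-a..a} (\<lambda>z. (w 0 z \<tau>)^2))
    \<le> 1/nu * integral {0..t} (\<lambda>\<tau>. cyl_int R a (\<lambda>r z. (u r z \<tau>)^4))
      + c * integral {0..t} (\<lambda>\<tau>. (cyl_int R a (\<lambda>r z. \<bar>F r z \<tau>\<bar> powr (6/5))) powr (5/3))
      + cyl_int R a (\<lambda>r z. (w r z 0)^2)"
  using omega1_problem_energy_estimate[OF assms] assms(3) by (intro exI[of _ "32 * pi / nu"]) auto

end
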